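(* Assume $a_1\ge5$ and $a_2=1$. Let $\mu=k\Lambda_1-l\Lambda_2\in P$ with $k,l\in\mathbb Z$, and let $\{p^\mu_m\}_{m\in\mathbb Z}$ be defined by $p^\mu_0=l$, $p^\mu_1=k$, $p^\mu_{m+2}=a_2p^\mu_{m+1}-p^\mu_m$ ($m\ge0$ even), $p^\mu_{m+2}=a_1p^\mu_{m+1}-p^\mu_m$ ($m\ge0$ odd), and for $m<0$: $p^\mu_m=a_2p^\mu_{m+1}-p^\mu_{m+2}$ ($m$ even), $p^\mu_m=a_1p^\mu_{m+1}-p^\mu_{m+2}$ ($m$ odd). (1) If there exists $n\in\mathbb Z$ with $0<p^\mu_{2n}\le p^\mu_{2n+2}$, then $0<p^\mu_{2m}\le p^\mu_{2m+2}$ for all $m\ge n$. (2) If there exists $n\in\mathbb Z$ with $0<p^\mu_{2n}\le p^\mu_{2n-2}$, then $0<p^\mu_{2m}\le p^\mu_{2m-2}$ for all $m\le n$.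
   Context: $a_1,a_2$ are positive integers (here $a_2=1$, $a_1\ge5$), and $P=\mathbb Z\Lambda_1\oplus\mathbb Z\Lambda_2$ is the weight lattice of the Kac–Moody algebra with generalized Cartan matrix $\begin{pmatrix}2&-a_1\\-a_2&2\end{pmatrix}$, with fundamental weights $\Lambda_1,\Lambda_2$. *)

theory Defs
  imports Main
begin

fun pfwd :: "int \<Rightarrow> int \<Rightarrow> int \<Rightarrow> int \<Rightarrow> nat \<Rightarrow> int" where
  "pfwd a1 a2 k l 0 = l"
| "pfwd a1 a2 k l (Suc 0) = k"
| "pfwd a1 a2 k l (Suc (Suc m)) =
     (if even m then a2 else a1) * pfwd a1 a2 k l (Suc m) - pfwd a1 a2 k l m"

text \<open>Backward part: pbwd a1 a2 k l j = p_(-j) for j >= 0.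
  p_(-1) = a1 p_0 - p_1 ; p_(-(j+2)) = a(-(j+2)) p_(-(j+1)) - p_(-j),
  where -(j+2) has the parity of j.\<close>
fun pbwd :: "int \<Rightarrow> int \<Rightarrow> int \<Rightarrow> int \<Rightarrow> nat \<Rightarrow> int" where
  "pbwd a1 a2 k l 0 = l"
| "pbwd a1 a2 k l (Suc 0) = a1 * l - k"
| "pbwd a1 a2 k l (Suc (Suc j)) =
     (if even j then a2 else a1) * pbwd a1 a2 k l (Suc j) - pbwd a1 a2 k l j"

definition pseq :: "int \<Rightarrow> int \<Rightarrow> int \<Rightarrow> int \<Rightarrow> int \<Rightarrow> int" where
  "pseq a1 a2 k l m = (if 0 \<le> m then pfwd a1 a2 k l (nat m) else pbwd a1 a2 k l (nat (- m)))"

end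

theory Submission
  imports Defs
begin

text \<open>Eliminating the odd-indexed terms, the even-indexed terms \<open>q n = p\<^sub>2\<^sub>n\<close> satisfy
  the symmetric three-term recurrence \<open>q (n+1) + q (n-1) = (a\<^sub>1 a\<^sub>2 - 2) q n\<close>.
  When the coefficient \<open>c\<close> is at least 2 (so \<open>a\<^sub>1 a\<^sub>2 \<ge> 4\<close> suffices), a positive non-decreasing step propagates:
  \<open>q (n+2) = c q (n+1) - q n \<ge> 2 q (n+1) - q n \<ge> q (n+1)\<close>. The recurrence is invariant
  under \<open>n \<mapsto> -n\<close>, which turns the forward statement into the backward one.\<close>

lemma pseq_rec:
  "pseq a1 a2 k l m + pseq a1 a2 k l (m + 2) = (if even m then a2 else a1) * pseq a1 a2 k l (m + 1)"
proof (cases "m \<ge> 0")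
  case True
  then obtain n where "m = int n"
    by (metis nonneg_int_cases)
  moreover have "nat (m + 2) = Suc (Suc n)" "nat (m + 1) = Suc n"
    using \<open>m = int n\<close> by auto
  ultimately show ?thesis
    by (simp add: pseq_def)
next
  case False
  consider "m = -1" | j where "m = - int j - 2"
  proof -
    have "m = - int (nat (- m - 2)) - 2" if "m \<noteq> -1"
      using False that by simp
    then show ?thesis
      using that by blast
  qed
  then show ?thesis
  proof cases
    case 1
    then show ?thesis
      by (simp add: pseq_def)
  next
    case (2 j)
    then have "nat (- m) = Suc (Suc j)" "nat (- (m + 1)) = Suc j" "nat (- (m + 2)) = j"
      and "even m = even j"
      by auto
    moreover have "pseq a1 a2 k l (m + 2) = pbwd a1 a2 k l j"
      using 2 \<open>nat (- (m + 2)) = j\<close> by (cases "j = 0") (auto simp: pseq_def)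
    ultimately show ?thesis
      using 2 by (simp add: pseq_def)
  qed
qed

lemma pseq_even_rec:
  "pseq a1 a2 k l (2 * n + 2) = (a1 * a2 - 2) * pseq a1 a2 k l (2 * n) - pseq a1 a2 k l (2 * n - 2)"
proof -
  define p where "p = pseq a1 a2 k l"
  have "p (2 * n - 2) + 2 * p (2 * n) + p (2 * n + 2) = a2 * (p (2 * n - 1) + p (2 * n + 1))"
    using pseq_rec[of a1 a2 k l "2 * n"] pseq_rec[of a1 a2 k l "2 * n - 2"]
    unfolding p_def by (simp add: algebra_simps)
  also have "\<dots> = a1 * a2 * p (2 * n)"
    using pseq_rec[of a1 a2 k l "2 * n - 1"] unfolding p_def by (simp add: algebra_simps)
  finally show ?thesis
    unfolding p_def by (simp add: algebra_simps)
qed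

lemma three_term_rec_pos_mono_forward:
  fixes q :: "int \<Rightarrow> 'a :: linordered_idom"
  assumes rec: "\<And>n. q (n + 1) = c * q n - q (n - 1)"
    and "2 \<le> c"
    and "0 < q n" "q n \<le> q (n + 1)"
    and "n \<le> m"
  shows "0 < q m \<and> q m \<le> q (m + 1)"
  using \<open>n \<le> m\<close>
proof (induction m rule: int_ge_induct)
  case base
  show ?case
    using assms(3,4) by simp
next
  case (step i)
  have "q (i + 1) \<le> 2 * q (i + 1) - q i"
    using step.IH by simp
  also have "\<dots> \<le> c * q (i + 1) - q i"
    using step.IH \<open>2 \<le> c\<close> by (simp add: mult_right_mono)
  also have "\<dots> = q (i + 1 + 1)"
    using rec[of "i + 1"] by simp
  finally show ?case
    using step.IH by simp
qed

lemma three_term_rec_pos_mono_backward: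
  fixes q :: "int \<Rightarrow> 'a :: linordered_idom"
  assumes rec: "\<And>n. q (n + 1) = c * q n - q (n - 1)"
    and "2 \<le> c"
    and "0 < q n" "q n \<le> q (n - 1)"
    and "m \<le> n"
  shows "0 < q m \<and> q m \<le> q (m - 1)"
proof -
  have "q (- (i + 1)) = c * q (- i) - q (- (i - 1))" for i
  proof -
    have "- (i + 1) = - i - 1" "- (i - 1) = - i + 1"
      by simp_all
    then show ?thesis
      using rec[of "- i"] by simp
  qed
  from three_term_rec_pos_mono_forward[where q = "\<lambda>i. q (- i)", OF this \<open>2 \<le> c\<close>, of "- n" "- m"]
  show ?thesis
    using assms(3-5) by (simp add: algebra_simps)
qed

theorem lemmaB1:
  fixes a1 a2 k l :: int
  assumes "a1 \<ge> 5" and "a2 = 1"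
  shows "(\<forall>n. 0 < pseq a1 a2 k l (2*n) \<and> pseq a1 a2 k l (2*n) \<le> pseq a1 a2 k l (2*n+2)
            \<longrightarrow> (\<forall>m\<ge>n. 0 < pseq a1 a2 k l (2*m) \<and> pseq a1 a2 k l (2*m) \<le> pseq a1 a2 k l (2*m+2)))
       \<and> (\<forall>n. 0 < pseq a1 a2 k l (2*n) \<and> pseq a1 a2 k l (2*n) \<le> pseq a1 a2 k l (2*n-2)
            \<longrightarrow> (\<forall>m\<le>n. 0 < pseq a1 a2 k l (2*m) \<and> pseq a1 a2 k l (2*m) \<le> pseq a1 a2 k l (2*m-2)))"
proof -
  define q where "q n = pseq a1 a2 k l (2 * n)" for n
  have rec: "q (n + 1) = (a1 * a2 - 2) * q n - q (n - 1)" for n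
    using pseq_even_rec[of a1 a2 k l n] unfolding q_def by (simp add: algebra_simps)
  have coeff: "2 \<le> a1 * a2 - 2"
    using assms by simp
  have neighbours: "pseq a1 a2 k l (2 * n + 2) = q (n + 1)" "pseq a1 a2 k l (2 * n - 2) = q (n - 1)"
    for n
    unfolding q_def by (simp_all add: algebra_simps)
  show ?thesis
    unfolding q_def[symmetric] neighbours
  proof (rule conjI; intro allI impI)
    fix n m
    assume "0 < q n \<and> q n \<le> q (n + 1)" and "n \<le> m"
    then show "0 < q m \<and> q m \<le> q (m + 1)"
      using three_term_rec_pos_mono_forward[OF rec coeff] by blast
  next
    fix n m
    assume "0 < q n \<and> q n \<le> q (n - 1)" and "m \<le> n"
    then show "0 < q m \<and> q m \<le> q (m - 1)"
      using three_term_rec_pos_mono_backward[OF rec coeff] by blast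
  qed
qed

end
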